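(* Let $G$ be a finite graph with $\mathrm{Aut}(G)\neq\{\mathrm{id}\}$, and let $\alpha\in\mathrm{Aut}(G)\setminus\{\mathrm{id}\}$ be such that $c(\alpha)=\max\{c(\beta):\beta\in\mathrm{Aut}(G)\}$ (equivalently $\theta(G)=c(\alpha)+1$). Then there is a prime number $p$ such that $\alpha$ has order $p$. In particular, every cycle of $\alpha$ has length $p$ or $1$.
   Context: All graphs are finite and simple. For a permutation $\alpha$ of $V(G)$, $c(\alpha)$ denotes the number of cycles in the cycle decomposition of $\alpha$, fixed points counting as cycles of length 1, with the convention $c(\mathrm{id})=0$. The distinguishing threshold $\theta(G)$ of a graph $G$ is the minimum number $k$ such that every vertex coloring of $G$ using exactly $k$ colors is distinguishing (i.e. no non-identity automorphism of $G$ maps every vertex to a vertex of the same color); equivalently, $\theta(G)=1+\max\{c(\alpha):\alpha\in\mathrm{Aut}(G)\}$. *)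

theory Defs
  imports Main "HOL-Combinatorics.Orbits" "HOL-Computational_Algebra.Primes"
begin

definition simple_graph :: "'a set \<Rightarrow> ('a \<Rightarrow> 'a \<Rightarrow> bool) \<Rightarrow> bool" where
  "simple_graph V E \<longleftrightarrow> finite V \<and> (\<forall>x y. E x y \<longrightarrow> x \<in> V \<and> y \<in> V)
     \<and> (\<forall>x y. E x y \<longrightarrow> E y x) \<and> (\<forall>x. \<not> E x x)"

definition graph_aut :: "'a set \<Rightarrow> ('a \<Rightarrow> 'a \<Rightarrow> bool) \<Rightarrow> ('a \<Rightarrow> 'a) set" where
  "graph_aut V E = {\<alpha>. \<alpha> permutes V \<and> (\<forall>x\<in>V. \<forall>y\<in>V. E x y \<longleftrightarrow> E (\<alpha> x) (\<alpha> y))}"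

text \<open>Number of cycles of a permutation of V (fixed points count as cycles),
  with the convention that the identity has 0 cycles.\<close>
definition num_cycles :: "'a set \<Rightarrow> ('a \<Rightarrow> 'a) \<Rightarrow> nat" where
  "num_cycles V \<alpha> = (if \<alpha> = id then 0 else card ((\<lambda>x. orbit \<alpha> x) ` V))"

end

theory Submission
  imports Defs "HOL-Combinatorics.Cycles"
begin

text \<open>Let \<open>m\<close> be the order of \<open>\<alpha>\<close> and suppose a prime \<open>q\<close> divides \<open>m\<close> properly.
  If \<open>q\<close> divides the length of some cycle of \<open>\<alpha>\<close>, then \<open>\<alpha>\<^sup>q\<close> splits that cycle while
  only refining the others, so the automorphism \<open>\<alpha>\<^sup>q \<noteq> id\<close> has more cycles than \<open>\<alpha>\<close>.
  Otherwise every cycle length is coprime to \<open>q\<close> and divides \<open>m\<close>, hence divides \<open>m/q\<close>,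
  and \<open>\<alpha>\<^bsup>m/q\<^esup> = id\<close> contradicts the minimality of \<open>m\<close>.\<close>

lemma card_orbit_eq_least_power:
  assumes "permutation p"
  shows "card (orbit p x) = least_power p x"
proof -
  have "orbit p x = set (support p x)"
    using orbit_altdef_permutation[OF assms] support_set[OF assms] by auto
  also have "card \<dots> = length (support p x)"
    by (rule distinct_card[OF cycle_of_permutation[OF assms]])
  finally show ?thesis by simp
qed

lemma funpow_eq_self_iff_card_orbit_dvd:
  assumes "permutation p"
  shows "(p ^^ n) x = x \<longleftrightarrow> card (orbit p x) dvd n"
  using least_power_dvd[OF assms] card_orbit_eq_least_power[OF assms] by simp

lemma permutation_order_exists:
  assumes "permutation p"
  obtains m where "0 < m" "p ^^ m = id" "\<And>n. 0 < n \<Longrightarrow> n < m \<Longrightarrow> p ^^ n \<noteq> id"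
proof -
  obtain n where "p ^^ n = id" "0 < n"
    using permutation_is_nilpotent[OF assms] .
  then have "\<exists>m. 0 < m \<and> p ^^ m = id" by blast
  then obtain m where "0 < m \<and> p ^^ m = id" "\<forall>k<m. \<not> (0 < k \<and> p ^^ k = id)"
    unfolding exists_least_iff[of "\<lambda>m. 0 < m \<and> p ^^ m = id"] by blast
  then show thesis by (intro that) auto
qed

lemma orbit_eq_if_in_orbit:
  assumes "permutation p" "y \<in> orbit p x"
  shows "orbit p y = orbit p x"
  using orbit_cyclic_eq3[OF cyclic_on_orbit'[OF assms(1)] assms(2)] .

lemma orbit_funpow_subset:
  assumes "0 < k"
  shows "orbit (p ^^ k) x \<subseteq> orbit p x"
proof
  fix y assume "y \<in> orbit (p ^^ k) x"
  then obtain n where "0 < n" "y = ((p ^^ k) ^^ n) x" by (auto simp: orbit_altdef)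
  then have "y = (p ^^ (k * n)) x" "0 < k * n"
    using assms by (simp_all add: funpow_mult)
  then show "y \<in> orbit p x" by (auto simp: orbit_altdef)
qed

lemma card_orbit_funpow_less:
  assumes "permutation p" "1 < q" "q dvd card (orbit p x)"
  shows "card (orbit (p ^^ q) x) < card (orbit p x)"
proof -
  define L where "L = card (orbit p x)"
  have "0 < L"
    unfolding L_def using finite_orbit[OF permutation_self_in_orbit[OF assms(1)]]
    by (simp add: card_gt_0_iff orbit_nonempty)
  have "((p ^^ q) ^^ (L div q)) x = (p ^^ L) x"
    using assms(3) by (simp add: funpow_mult L_def)
  also have "\<dots> = x"
    using funpow_eq_self_iff_card_orbit_dvd[OF assms(1)] by (simp add: L_def)
  finally have "card (orbit (p ^^ q) x) dvd L div q"
    using funpow_eq_self_iff_card_orbit_dvd[OF permutation_funpow[OF assms(1)]] by blast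
  moreover have "0 < L div q"
    using \<open>0 < L\<close> assms(2,3) by (auto simp: L_def elim: dvdE)
  ultimately have "card (orbit (p ^^ q) x) \<le> L div q" by (rule dvd_imp_le)
  also have "\<dots> < L" using \<open>0 < L\<close> assms(2) by simp
  finally show ?thesis by (simp add: L_def)
qed

text \<open>The orbits of \<open>p\<^sup>k\<close> refine those of \<open>p\<close>; merging them back is onto but not injective.\<close>

lemma card_orbits_less_card_orbits_funpow:
  assumes "p permutes V" "finite V" "0 < k" "x \<in> V" "orbit (p ^^ k) x \<noteq> orbit p x"
  shows "card (orbit p ` V) < card (orbit (p ^^ k) ` V)"
proof -
  have perm: "permutation p" using assms(1,2) permutation_permutes by blast
  then have perm_k: "permutation (p ^^ k)" by (rule permutation_funpow)
  have sub: "orbit (p ^^ k) z \<subseteq> orbit p z" for z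
    by (rule orbit_funpow_subset[OF assms(3)])
  define merge where "merge Q = \<Union> (orbit p ` Q)" for Q
  have merge_orbit: "merge (orbit (p ^^ k) z) = orbit p z" for z
  proof -
    have "orbit p w = orbit p z" if "w \<in> orbit (p ^^ k) z" for w
      using orbit_eq_if_in_orbit[OF perm] sub[of z] that by blast
    then have "orbit p ` orbit (p ^^ k) z = (\<lambda>_. orbit p z) ` orbit (p ^^ k) z"
      by (rule image_cong[OF refl])
    also have "\<dots> = {orbit p z}"
      by (rule image_constant[OF permutation_self_in_orbit[OF perm_k]])
    finally show ?thesis by (simp add: merge_def)
  qed
  obtain y where y: "y \<in> orbit p x" "y \<notin> orbit (p ^^ k) x"
    using assms(5) sub[of x] by blast
  have "y \<in> V" using y(1) permutes_orbit_subset[OF assms(1,4)] by blast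
  have "orbit (p ^^ k) y \<noteq> orbit (p ^^ k) x"
    using y(2) permutation_self_in_orbit[OF perm_k, of y] by blast
  moreover have "merge (orbit (p ^^ k) y) = merge (orbit (p ^^ k) x)"
    using merge_orbit orbit_eq_if_in_orbit[OF perm y(1)] by simp
  ultimately have "\<not> inj_on merge (orbit (p ^^ k) ` V)"
    using \<open>y \<in> V\<close> assms(4) by (meson image_eqI inj_onD)
  then have "card (merge ` orbit (p ^^ k) ` V) \<noteq> card (orbit (p ^^ k) ` V)"
    using inj_on_iff_eq_card[of "orbit (p ^^ k) ` V" merge] assms(2) by simp
  then have "card (merge ` orbit (p ^^ k) ` V) < card (orbit (p ^^ k) ` V)"
    using card_image_le[of "orbit (p ^^ k) ` V" merge] assms(2) by simp
  moreover have "merge ` orbit (p ^^ k) ` V = orbit p ` V"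
    using merge_orbit by (auto simp: image_image)
  ultimately show ?thesis by simp
qed

lemma num_cycles_less_num_cycles_funpow:
  assumes "\<alpha> permutes V" "finite V" "\<alpha> ^^ q \<noteq> id" "1 < q" "x \<in> V" "q dvd card (orbit \<alpha> x)"
  shows "num_cycles V \<alpha> < num_cycles V (\<alpha> ^^ q)"
proof -
  have perm: "permutation \<alpha>" using assms(1,2) permutation_permutes by blast
  have "orbit (\<alpha> ^^ q) x \<noteq> orbit \<alpha> x"
    using card_orbit_funpow_less[OF perm assms(4,6)] by auto
  then have "card (orbit \<alpha> ` V) < card (orbit (\<alpha> ^^ q) ` V)"
    using card_orbits_less_card_orbits_funpow[OF assms(1,2) _ assms(5)] assms(4) by simp
  moreover have "\<alpha> \<noteq> id" using assms(3) by auto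
  ultimately show ?thesis using assms(3) by (simp add: num_cycles_def)
qed

lemma funpow_eq_id_cancel_coprime:
  assumes "p permutes V" "finite V" "p ^^ (q * k) = id"
    and "\<forall>x\<in>V. coprime (card (orbit p x)) q"
  shows "p ^^ k = id"
proof
  fix x
  have perm: "permutation p" using assms(1,2) permutation_permutes by blast
  show "(p ^^ k) x = id x"
  proof (cases "x \<in> V")
    case True
    have "card (orbit p x) dvd q * k"
      using funpow_eq_self_iff_card_orbit_dvd[OF perm] assms(3) by (metis id_apply)
    then have "card (orbit p x) dvd k"
      using assms(4) True coprime_dvd_mult_right_iff by blast
    then show ?thesis using funpow_eq_self_iff_card_orbit_dvd[OF perm] by simp
  next
    case False
    then show ?thesis using permutes_not_in[OF permutes_funpow[OF assms(1)]] by simp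
  qed
qed

lemma graph_aut_comp:
  assumes "\<alpha> \<in> graph_aut V E" "\<beta> \<in> graph_aut V E"
  shows "\<alpha> \<circ> \<beta> \<in> graph_aut V E"
proof -
  have \<alpha>: "\<alpha> permutes V" and \<beta>: "\<beta> permutes V"
    using assms by (simp_all add: graph_aut_def)
  have edges_\<alpha>: "E x y \<longleftrightarrow> E (\<alpha> x) (\<alpha> y)" and edges_\<beta>: "E x y \<longleftrightarrow> E (\<beta> x) (\<beta> y)"
    if "x \<in> V" "y \<in> V" for x y
    using assms that unfolding graph_aut_def by blast+
  have "E x y \<longleftrightarrow> E (\<alpha> (\<beta> x)) (\<alpha> (\<beta> y))" if "x \<in> V" "y \<in> V" for x y
    using edges_\<beta>[OF that] edges_\<alpha>[OF permutes_in_image[OF \<beta>, THEN iffD2, OF that(1)]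
        permutes_in_image[OF \<beta>, THEN iffD2, OF that(2)]] by blast
  then show ?thesis
    using permutes_compose[OF \<beta> \<alpha>] unfolding graph_aut_def mem_Collect_eq comp_def by blast
qed

lemma graph_aut_funpow:
  assumes "\<alpha> \<in> graph_aut V E"
  shows "\<alpha> ^^ n \<in> graph_aut V E"
proof (induction n)
  case 0
  show ?case using permutes_id[of V] by (simp add: graph_aut_def id_def)
next
  case (Suc n)
  then show ?case unfolding funpow.simps(2) by (rule graph_aut_comp[OF assms])
qed

lemma prime_order_if_num_cycles_maximal:
  assumes "\<alpha> permutes V" "finite V" "\<alpha> \<noteq> id"
    and maximal: "\<And>n. \<alpha> ^^ n \<noteq> id \<Longrightarrow> num_cycles V (\<alpha> ^^ n) \<le> num_cycles V \<alpha>"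
    and order: "0 < m" "\<alpha> ^^ m = id" "\<And>n. 0 < n \<Longrightarrow> n < m \<Longrightarrow> \<alpha> ^^ n \<noteq> id"
  shows "prime m"
proof (rule ccontr)
  assume "\<not> prime m"
  have "m \<noteq> 1" using order(2) assms(3) by auto
  then obtain q where q: "prime q" "q dvd m" using prime_factor_nat by blast
  with \<open>\<not> prime m\<close> have "q \<noteq> m" by blast
  have "1 < q" using q(1) by (rule prime_gt_1_nat)
  have "q < m" using dvd_imp_le[OF q(2) order(1)] \<open>q \<noteq> m\<close> by simp
  have "\<alpha> ^^ q \<noteq> id" using order(3) \<open>1 < q\<close> \<open>q < m\<close> by simp
  show False
  proof (cases "\<exists>x\<in>V. q dvd card (orbit \<alpha> x)")
    case True
    then have "num_cycles V \<alpha> < num_cycles V (\<alpha> ^^ q)"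
      using num_cycles_less_num_cycles_funpow[OF assms(1,2) \<open>\<alpha> ^^ q \<noteq> id\<close> \<open>1 < q\<close>] by blast
    with maximal[OF \<open>\<alpha> ^^ q \<noteq> id\<close>] show False by simp
  next
    case False
    then have "\<alpha> ^^ (m div q) = id"
      using funpow_eq_id_cancel_coprime[OF assms(1,2), of q "m div q"] order(2) q
      by (simp add: prime_imp_coprime coprime_commute)
    moreover have "0 < m div q" "m div q < m"
      using order(1) q(2) \<open>1 < q\<close> by (auto elim: dvdE)
    ultimately show False using order(3) by blast
  qed
qed

theorem mainTheorem1:
  fixes V :: "'a set" and E :: "'a \<Rightarrow> 'a \<Rightarrow> bool" and \<alpha> :: "'a \<Rightarrow> 'a"
  assumes "simple_graph V E"
    and "graph_aut V E \<noteq> {id}"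
    and "\<alpha> \<in> graph_aut V E" and "\<alpha> \<noteq> id"
    and "\<forall>\<beta>\<in>graph_aut V E. num_cycles V \<beta> \<le> num_cycles V \<alpha>"
  shows "\<exists>p::nat. prime p \<and> (\<alpha> ^^ p = id) \<and> (\<forall>n. 0 < n \<and> n < p \<longrightarrow> \<alpha> ^^ n \<noteq> id)
           \<and> (\<forall>x\<in>V. card (orbit \<alpha> x) = p \<or> card (orbit \<alpha> x) = 1)"
proof -
  have fin: "finite V" using assms(1) by (simp add: simple_graph_def)
  have \<alpha>: "\<alpha> permutes V" using assms(3) by (simp add: graph_aut_def)
  then have perm: "permutation \<alpha>" using fin permutation_permutes by blast
  obtain m where m: "0 < m" "\<alpha> ^^ m = id" "\<And>n. 0 < n \<Longrightarrow> n < m \<Longrightarrow> \<alpha> ^^ n \<noteq> id"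
    using permutation_order_exists[OF perm] by blast
  have "num_cycles V (\<alpha> ^^ n) \<le> num_cycles V \<alpha>" for n
    using assms(5) graph_aut_funpow[OF assms(3)] by blast
  then have "prime m"
    using prime_order_if_num_cycles_maximal[OF \<alpha> fin assms(4) _ m] by blast
  moreover have "card (orbit \<alpha> x) dvd m" for x
    using funpow_eq_self_iff_card_orbit_dvd[OF perm] m(2) by (metis id_apply)
  ultimately show ?thesis using m prime_nat_iff by blast
qed

end
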